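(* Suppose $c'(t)<0$ and $c''(t)\ge0$ for all $t\in[0,1]$. Then there exists $\hat s_S\in(0,\tilde s)$ such that $$EU_S^F(\hat s_S)>\max\{EU_S^D,EU_S^E\},$$ where $EU_S^D=EU_S^F(1)$ and $EU_S^E=EU_S^F(0)$.
   Context: Model: $n\ge2$ bidders with i.i.d. values on $[0,1]$, twice differentiable CDF $F$, density $f$. Write $G=F^{n-1}$, $g=G'$, and $h(v,x)=n(n-1)f(v)f(x)F^{n-2}(x)$. Time cost: $c:[0,1]\to\mathbb{R}_+$, twice differentiable, with $c(0)=1$ and $c'>-1$. A winner with value $v$ paying $p$ after duration $t$ gets $c(t)v-p$; the auctioneer gets $p$. Istanbul Flower Auction with starting price $s\in[0,1]$: - Bidders with value $v\ge p(s)$ (equilibrium cutoff $p(s)\in[s,1]$) bid at $s$. An English phase among them ascends from $s$ (duration $p-s$), each staying until $m(v,s)$ with $c(m(v,s)-s)v-m(v,s)=0$; a sole initial bidder buys at $s$. - If nobody bids, a Dutch phase descends from $s$ (duration $s-p$). A bidder with value $v<p(s)$ bids $b(v,s)$, the strictly increasing solution of $\partial_v b=\frac{g(v)}{G(v)}\frac{c(s-b)v-b}{1+c'(s-b)v}$ with $b(0,s)=0$. When $p(s)<1$, $b(p(s),s)=s$. The threshold $\tilde s\in(0,1)$ is such that $p(s)<1$ with $p$ increasing on $[0,\tilde s)$, and $p(s)=1$ on $[\tilde s,1]$. Expected social welfare (auctioneer's utility plus the sum of bidders' utilities) is $$EU_S^F(s)=\int_0^{p(s)}c(s-b(v,s))v\,dF^n(v)+\int_{p(s)}^1\Big(\int_0^{p(s)}v\,h(v,x)\,dx+\int_{p(s)}^v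 c(m(x,s)-s)v\,h(v,x)\,dx\Big)dv.$$ *)

theory Defs
  imports "HOL-Analysis.Analysis"
begin

text \<open>Istanbul Flower Auction model. F is the common CDF on [0,1], f its density,
  n the number of bidders.\<close>

definition G_fn :: "nat \<Rightarrow> (real \<Rightarrow> real) \<Rightarrow> real \<Rightarrow> real" where
  "G_fn n F v = F v ^ (n - 1)"

definition g_fn :: "nat \<Rightarrow> (real \<Rightarrow> real) \<Rightarrow> (real \<Rightarrow> real) \<Rightarrow> real \<Rightarrow> real" where
  "g_fn n F f v = real (n - 1) * F v ^ (n - 2) * f v"

definition h_fn :: "nat \<Rightarrow> (real \<Rightarrow> real) \<Rightarrow> (real \<Rightarrow> real) \<Rightarrow> real \<Rightarrow> real \<Rightarrow> real" where
  "h_fn n F f v x = real n * real (n - 1) * f v * f x * F x ^ (n - 2)"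

text \<open>Expected social welfare of the Istanbul Flower Auction with starting price s.
  b v s: Dutch-phase bid, m v s: English-phase drop-out price, p s: cutoff.
  The Stieltjes measure dF^n(v) is written with its density n F(v)^(n-1) f(v).\<close>

definition EU_S_F ::
  "nat \<Rightarrow> (real \<Rightarrow> real) \<Rightarrow> (real \<Rightarrow> real) \<Rightarrow> (real \<Rightarrow> real) \<Rightarrow>
   (real \<Rightarrow> real \<Rightarrow> real) \<Rightarrow> (real \<Rightarrow> real \<Rightarrow> real) \<Rightarrow> (real \<Rightarrow> real) \<Rightarrow> real \<Rightarrow> real" where
  "EU_S_F n F f c b m p s =
     integral {0..p s} (\<lambda>v. c (s - b v s) * v * (real n * F v ^ (n - 1) * f v))
   + integral {p s..1} (\<lambda>v.
        integral {0..p s} (\<lambda>x. v * h_fn n F f v x)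
      + integral {p s..v} (\<lambda>x. c (m x s - s) * v * h_fn n F f v x))"

end

theory Submission
  imports Defs
begin

text \<open>Against the Dutch auction (\<open>s = 1\<close>): for \<open>s\<close> just below
  \<open>s_tilde\<close> the cutoff \<open>p s\<close> is close to \<open>1\<close>, so the English phase hardly matters, while a Dutch
  phase started at the lower price \<open>s\<close> ends strictly earlier than one started at \<open>1\<close> (a
  comparison of solutions of the bid ODE); this gives a gain for low values that does not vanish
  as \<open>s \<rightarrow> s_tilde\<close>. Against the English auction (\<open>s = 0\<close>): for small \<open>s\<close> the cutoff \<open>p s\<close> is
  small; starting the English clock at \<open>s\<close> shortens the English phase by at least \<open>s / 2\<close>, which by
  convexity of \<open>c\<close> gains at least \<open>- c' 1 * s / 2\<close> per sale, whereas sales in the Dutch phase lose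
  at most \<open>s F (p s) ^ n = o(s)\<close>.\<close>

lemma deriv_nonneg_imp_mono_on:
  fixes g :: "real \<Rightarrow> real"
  assumes "\<And>x. x \<in> {a..b} \<Longrightarrow> (g has_real_derivative g' x) (at x within {a..b})"
    and "\<And>x. x \<in> {a<..<b} \<Longrightarrow> 0 \<le> g' x"
  shows "mono_on {a..b} g"
proof (rule mono_onI)
  fix x y assume xy: "x \<in> {a..b}" "y \<in> {a..b}" "x \<le> y"
  show "g x \<le> g y"
  proof (rule DERIV_nonneg_imp_increasing_open[OF \<open>x \<le> y\<close>])
    fix z assume "x < z" "z < y"
    with xy have "a < z" "z < b" by auto
    then show "\<exists>d. DERIV g z :> d \<and> 0 \<le> d"
      using assms(1)[of z] assms(2)[of z] at_within_Icc_at[of a z b] by auto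
  next
    have "continuous_on {a..b} g" using assms(1) by (rule DERIV_continuous_on)
    then show "continuous_on {x..y} g" by (rule continuous_on_subset) (use xy in auto)
  qed
qed

lemma deriv_pos_imp_strict_mono_on:
  fixes g :: "real \<Rightarrow> real"
  assumes "\<And>x. x \<in> {a..b} \<Longrightarrow> (g has_real_derivative g' x) (at x within {a..b})"
    and "\<And>x. x \<in> {a<..<b} \<Longrightarrow> 0 < g' x"
  shows "strict_mono_on {a..b} g"
proof (rule strict_mono_onI)
  fix x y assume xy: "x \<in> {a..b}" "y \<in> {a..b}" "x < y"
  show "g x < g y"
  proof (rule DERIV_pos_imp_increasing_open[OF \<open>x < y\<close>])
    fix z assume "x < z" "z < y"
    with xy have "a < z" "z < b" by auto
    then show "\<exists>d. DERIV g z :> d \<and> 0 < d"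
      using assms(1)[of z] assms(2)[of z] at_within_Icc_at[of a z b] by auto
  next
    have "continuous_on {a..b} g" using assms(1) by (rule DERIV_continuous_on)
    then show "continuous_on {x..y} g" by (rule continuous_on_subset) (use xy in auto)
  qed
qed

lemma integrable_mono_on_times_continuous:
  fixes g k :: "real \<Rightarrow> real"
  assumes "mono_on {a..b} g" "continuous_on {a..b} k"
  shows "(\<lambda>x. g x * k x) integrable_on {a..b}"
proof -
  have meas: "g \<in> borel_measurable (lebesgue_on {a..b})"
  proof -
    have "space lborel = space lebesgue" "sets borel \<subseteq> sets lebesgue"
      by force+
    then show ?thesis
      by (metis assms(1) borel_measurable_mono_on_fnc borel_measurable_subalgebra mono_restrict_space
          space_lborel space_restrict_space)
  qed
  have bdd: "bounded (g ` {a..b})"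
  proof -
    have "norm (g x) \<le> \<bar>g a\<bar> + \<bar>g b\<bar>" if "x \<in> {a..b}" for x
    proof -
      have "g a \<le> g x" "g x \<le> g b" using that assms(1) by (auto intro: mono_onD)
      then show ?thesis by simp
    qed
    then show ?thesis unfolding bounded_iff by blast
  qed
  have "k absolutely_integrable_on {a..b}"
    using assms(2) by (rule absolutely_integrable_continuous_real)
  then have "(\<lambda>x. g x * k x) absolutely_integrable_on {a..b}"
    using absolutely_integrable_bounded_measurable_product_real[OF meas _ bdd] by simp
  then show ?thesis using absolutely_integrable_on_def by blast
qed

lemma eventually_pos_at_left_if_continuous:
  fixes g :: "real \<Rightarrow> real"
  assumes "continuous_on {a..b} g" "a < w" "w \<le> b" "0 < g w"
  shows "\<forall>\<^sub>F z in at_left w. 0 < g z \<and> z \<in> {a<..<w}"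
proof -
  obtain \<delta> where "0 < \<delta>" and \<delta>: "\<forall>z\<in>{a..b}. dist z w < \<delta> \<longrightarrow> dist (g z) (g w) < g w"
    using assms unfolding continuous_on_iff by fastforce
  show ?thesis
  proof (rule eventually_at_leftI[of "max a (w - \<delta>)"])
    fix z assume "z \<in> {max a (w - \<delta>)<..<w}"
    then have "z \<in> {a..b}" "dist z w < \<delta>" "z \<in> {a<..<w}" using assms by (auto simp: dist_real_def)
    with \<delta> show "0 < g z \<and> z \<in> {a<..<w}" by (force simp: dist_real_def abs_less_iff)
  qed (use assms \<open>0 < \<delta>\<close> in auto)
qed

text \<open>At the first point where \<open>e\<close> stops being positive it vanishes, and just to its left \<open>e\<close>
  would have to be both positive and nondecreasing.\<close>
lemma pos_if_deriv_nonneg_left_of_zeros: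
  fixes e :: "real \<Rightarrow> real"
  assumes cont: "continuous_on {a..b} e" and pos: "0 < e a"
    and zeros: "\<And>w. a < w \<Longrightarrow> w \<le> b \<Longrightarrow> e w = 0 \<Longrightarrow>
      \<forall>\<^sub>F z in at_left w. \<exists>d. DERIV e z :> d \<and> 0 \<le> d"
    and x: "x \<in> {a..b}"
  shows "0 < e x"
proof (rule ccontr)
  assume "\<not> 0 < e x"
  define Z where "Z = {a..x} \<inter> e -` {..0}"
  have cont_ax: "continuous_on {a..x} e" using cont by (rule continuous_on_subset) (use x in auto)
  have "closed Z"
    unfolding Z_def by (rule continuous_closed_preimage[OF cont_ax]) auto
  moreover have "bounded Z" by (rule bounded_subset[of "{a..x}"]) (auto simp: Z_def)
  ultimately have "compact Z" by (simp add: compact_eq_bounded_closed)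
  moreover have "Z \<noteq> {}" using \<open>\<not> 0 < e x\<close> x by (auto simp: Z_def)
  ultimately obtain w where w: "w \<in> Z" and w_min: "\<forall>z\<in>Z. w \<le> z"
    by (meson compact_attains_inf)
  have w_range: "a \<le> w" "w \<le> x" "e w \<le> 0" using w by (simp_all add: Z_def)
  have "a < w" using w_range pos by (cases "a = w") auto
  have pos_before: "0 < e z" if "a \<le> z" "z < w" for z
  proof (rule ccontr)
    assume "\<not> 0 < e z"
    then have "z \<in> Z" using that w_range by (simp add: Z_def)
    with w_min that show False by auto
  qed
  have "e w = 0"
  proof -
    have "continuous_on {a..w} e" using cont_ax by (rule continuous_on_subset) (use w_range in auto)
    then obtain z where "a \<le> z" "z \<le> w" "e z = 0"
      using IVT2'[of e w 0 a] w_range pos by auto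
    then show ?thesis using pos_before[of z] by (cases "z < w") auto
  qed
  then have "\<forall>\<^sub>F z in at_left w. \<exists>d. DERIV e z :> d \<and> 0 \<le> d"
    using zeros[of w] \<open>a < w\<close> w_range x by simp
  then have "\<forall>\<^sub>F z in at_left w. (\<exists>d. DERIV e z :> d \<and> 0 \<le> d) \<and> z \<in> {a<..<w}"
    using eventually_at_left_real[OF \<open>a < w\<close>] by (rule eventually_conj)
  then obtain l where l: "l < w"
    and l_deriv: "\<And>z. l < z \<Longrightarrow> z < w \<Longrightarrow> (\<exists>d. DERIV e z :> d \<and> 0 \<le> d) \<and> z \<in> {a<..<w}"
    unfolding eventually_at_left[OF \<open>a < w\<close>] by blast
  define u where "u = (max l a + w) / 2"
  have u: "a < u" "u < w" "\<And>z. u < z \<Longrightarrow> z < w \<Longrightarrow> \<exists>d. DERIV e z :> d \<and> 0 \<le> d"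
    using l l_deriv \<open>a < w\<close> by (auto simp: u_def)
  have "e u \<le> e w"
  proof (rule DERIV_nonneg_imp_increasing_open[of u w e])
    show "continuous_on {u..w} e"
      by (rule continuous_on_subset[OF cont_ax]) (use u w_range in auto)
  qed (use u in auto)
  with pos_before[of u] u \<open>e w = 0\<close> show False by auto
qed

text \<open>The hypotheses of the proposition, without the unneeded monotonicity of \<open>p\<close> and with the
  second-order assumptions on \<open>F\<close> and \<open>c\<close> weakened to what is used: \<open>f\<close> and \<open>c'\<close> continuous,
  \<open>c'\<close> nondecreasing.\<close>
locale flower_auction =
  fixes n :: nat
    and F f :: "real \<Rightarrow> real"
    and c c' :: "real \<Rightarrow> real"
    and b m :: "real \<Rightarrow> real \<Rightarrow> real"
    and p :: "real \<Rightarrow> real"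
    and s_tilde :: real
  assumes n_ge_2: "n \<ge> 2"
    and F_0: "F 0 = 0" and F_1: "F 1 = 1"
    and F_mono: "mono_on {0..1} F"
    and f_nonneg: "\<And>x. x \<in> {0..1} \<Longrightarrow> f x \<ge> 0"
    and F_deriv: "\<And>x. x \<in> {0..1} \<Longrightarrow> (F has_real_derivative f x) (at x within {0..1})"
    and f_cont: "continuous_on {0..1} f"
    and c_nonneg: "\<And>t. t \<in> {0..1} \<Longrightarrow> c t \<ge> 0"
    and c_deriv: "\<And>t. t \<in> {0..1} \<Longrightarrow> (c has_real_derivative c' t) (at t within {0..1})"
    and c'_cont: "continuous_on {0..1} c'"
    and c'_mono: "mono_on {0..1} c'"
    and c_0: "c 0 = 1"
    and c'_gt: "\<And>t. t \<in> {0..1} \<Longrightarrow> c' t > -1"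
    and c'_neg: "\<And>t. t \<in> {0..1} \<Longrightarrow> c' t < 0"
    and p_range: "\<And>s. s \<in> {0..1} \<Longrightarrow> s \<le> p s \<and> p s \<le> 1"
    and m_range: "\<And>s v. s \<in> {0..1} \<Longrightarrow> v \<in> {p s..1} \<Longrightarrow> s \<le> m v s \<and> m v s - s \<le> 1"
    and m_eq: "\<And>s v. s \<in> {0..1} \<Longrightarrow> v \<in> {p s..1} \<Longrightarrow> c (m v s - s) * v - m v s = 0"
    and b_cont: "\<And>s. s \<in> {0..1} \<Longrightarrow> continuous_on {0..p s} (\<lambda>v. b v s)"
    and b_strict: "\<And>s. s \<in> {0..1} \<Longrightarrow> strict_mono_on {0..p s} (\<lambda>v. b v s)"
    and b_zero: "\<And>s. s \<in> {0..1} \<Longrightarrow> b 0 s = 0"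
    and b_le: "\<And>s v. s \<in> {0..1} \<Longrightarrow> v \<in> {0..p s} \<Longrightarrow> b v s \<le> s"
    and b_ode: "\<And>s v. s \<in> {0..1} \<Longrightarrow> v \<in> {0<..<p s} \<Longrightarrow>
       ((\<lambda>w. b w s) has_real_derivative
          (g_fn n F f v / G_fn n F v) * ((c (s - b v s) * v - b v s) / (1 + c' (s - b v s) * v)))
       (at v)"
    and b_cut: "\<And>s. s \<in> {0..1} \<Longrightarrow> p s < 1 \<Longrightarrow> b (p s) s = s"
    and s_tilde: "0 < s_tilde" "s_tilde < 1"
    and p_lt_1: "\<And>s. s \<in> {0..<s_tilde} \<Longrightarrow> p s < 1"
    and p_eq_1: "\<And>s. s \<in> {s_tilde..1} \<Longrightarrow> p s = 1"
begin

lemma c_continuous: "continuous_on {0..1} c"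
  using c_deriv by (rule DERIV_continuous_on)

lemma F_continuous: "continuous_on {0..1} F"
  using F_deriv by (rule DERIV_continuous_on)

lemma c_DERIV: "0 < t \<Longrightarrow> t < 1 \<Longrightarrow> DERIV c t :> c' t"
  using c_deriv[of t] at_within_Icc_at[of 0 t 1] by auto

lemma F_DERIV: "0 < x \<Longrightarrow> x < 1 \<Longrightarrow> DERIV F x :> f x"
  using F_deriv[of x] at_within_Icc_at[of 0 x 1] by auto

lemma c_strict_antimono:
  assumes "0 \<le> x" "x < y" "y \<le> 1" shows "c y < c x"
proof -
  have "strict_mono_on {0..1} (\<lambda>t. - c t)"
    by (rule deriv_pos_imp_strict_mono_on[where g'="\<lambda>t. - c' t"])
       (use c'_neg in \<open>auto intro!: derivative_eq_intros c_deriv\<close>)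
  then show ?thesis using assms by (simp add: strict_mono_on_def)
qed

lemma c_antimono: "0 \<le> x \<Longrightarrow> x \<le> y \<Longrightarrow> y \<le> 1 \<Longrightarrow> c y \<le> c x"
  using c_strict_antimono by (cases "x = y") force+

lemma c_plus_id_mono:
  assumes "0 \<le> x" "x \<le> y" "y \<le> 1" shows "c x + x \<le> c y + y"
proof -
  have "mono_on {0..1} (\<lambda>t. c t + t)"
  proof (rule deriv_nonneg_imp_mono_on[where g'="\<lambda>t. c' t + 1"])
    show "x \<in> {0..1} \<Longrightarrow> ((\<lambda>t. c t + t) has_real_derivative c' x + 1) (at x within {0..1})" for x
      by (auto intro!: derivative_eq_intros c_deriv)
    show "x \<in> {0<..<1} \<Longrightarrow> 0 \<le> c' x + 1" for x
      using c'_gt[of x] by auto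
  qed
  then show ?thesis using assms by (simp add: mono_on_def)
qed

lemma c_decrease_ge:
  assumes "0 \<le> x" "x \<le> y" "y \<le> 1" shows "- c' 1 * (y - x) \<le> c x - c y"
proof -
  have "mono_on {0..1} (\<lambda>t. c' 1 * t - c t)"
    by (rule deriv_nonneg_imp_mono_on[where g'="\<lambda>t. c' 1 - c' t"])
       (auto intro!: derivative_eq_intros c_deriv mono_onD[OF c'_mono])
  then have "c' 1 * x - c x \<le> c' 1 * y - c y" using assms by (simp add: mono_on_def)
  then show ?thesis by (simp add: algebra_simps)
qed

lemma c_le_1: "0 \<le> t \<Longrightarrow> t \<le> 1 \<Longrightarrow> c t \<le> 1"
  using c_antimono[of 0 t] c_0 by auto

lemma one_minus_le_c: "0 \<le> t \<Longrightarrow> t \<le> 1 \<Longrightarrow> 1 - t \<le> c t"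
  using c_plus_id_mono[of 0 t] c_0 by auto

lemma ode_denominator_pos: "0 \<le> t \<Longrightarrow> t \<le> 1 \<Longrightarrow> 0 \<le> v \<Longrightarrow> v \<le> 1 \<Longrightarrow> 0 < 1 + c' t * v"
proof -
  assume "0 \<le> t" "t \<le> 1" "0 \<le> v" "v \<le> 1"
  moreover from this have "c' t * 1 \<le> c' t * v"
    using c'_neg[of t] by (intro mult_left_mono_neg) auto
  ultimately show ?thesis using c'_gt[of t] by auto
qed

lemma ode_denominator_le_1: "0 \<le> t \<Longrightarrow> t \<le> 1 \<Longrightarrow> 0 \<le> v \<Longrightarrow> 1 + c' t * v \<le> 1"
  using c'_neg[of t] by (simp add: mult_nonpos_nonneg)

definition pow_density :: "nat \<Rightarrow> real \<Rightarrow> real"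
  where "pow_density k x = real k * F x ^ (k - 1) * f x"

lemma F_range: "0 \<le> x \<Longrightarrow> x \<le> 1 \<Longrightarrow> 0 \<le> F x \<and> F x \<le> 1"
  using mono_onD[OF F_mono, of 0 x] mono_onD[OF F_mono, of x 1] F_0 F_1 by auto

lemma F_le: "0 \<le> x \<Longrightarrow> x \<le> y \<Longrightarrow> y \<le> 1 \<Longrightarrow> F x \<le> F y"
  using mono_onD[OF F_mono] by auto

lemma pow_density_nonneg: "0 \<le> x \<Longrightarrow> x \<le> 1 \<Longrightarrow> 0 \<le> pow_density k x"
  unfolding pow_density_def using F_range[of x] f_nonneg[of x] by auto

lemma pow_density_continuous: "continuous_on {0..1} (pow_density k)"
  unfolding pow_density_def by (intro continuous_intros F_continuous f_cont)

lemma has_integral_pow_density: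
  assumes "0 \<le> a" "a \<le> a'" "a' \<le> 1"
  shows "(pow_density k has_integral (F a' ^ k - F a ^ k)) {a..a'}"
proof (rule fundamental_theorem_of_calculus[OF \<open>a \<le> a'\<close>])
  fix x assume "x \<in> {a..a'}"
  with assms have "((\<lambda>x. F x ^ k) has_real_derivative pow_density k x) (at x within {0..1})"
    using DERIV_power[OF F_deriv, of x k] by (simp add: pow_density_def algebra_simps)
  then show "((\<lambda>x. F x ^ k) has_vector_derivative pow_density k x) (at x within {a..a'})"
    using assms by (auto simp: has_real_derivative_iff_has_vector_derivative[symmetric]
        intro: has_field_derivative_subset)
qed

lemma integral_pow_density:
  "0 \<le> a \<Longrightarrow> a \<le> a' \<Longrightarrow> a' \<le> 1 \<Longrightarrow> integral {a..a'} (pow_density k) = F a' ^ k - F a ^ k"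
  using has_integral_pow_density by (rule integral_unique)

lemma pow_density_1: "pow_density 1 = f"
  by (simp add: fun_eq_iff pow_density_def)

lemma g_fn_eq: "g_fn n F f = pow_density (n - 1)"
proof -
  have "n - 2 = n - 1 - 1" by simp
  then show ?thesis by (auto simp: g_fn_def pow_density_def)
qed

lemma h_fn_eq: "h_fn n F f v x = real n * f v * pow_density (n - 1) x"
  using fun_cong[OF g_fn_eq, of x] by (simp add: h_fn_def g_fn_def algebra_simps)

lemma b_strict_mono: "s \<in> {0..1} \<Longrightarrow> 0 \<le> v \<Longrightarrow> v < w \<Longrightarrow> w \<le> p s \<Longrightarrow> b v s < b w s"
  using strict_mono_onD[OF b_strict[of s], of v w] by auto

lemma b_mono: "s \<in> {0..1} \<Longrightarrow> 0 \<le> v \<Longrightarrow> v \<le> w \<Longrightarrow> w \<le> p s \<Longrightarrow> b v s \<le> b w s"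
  using b_strict_mono[of s v w] by (cases "v = w") auto

lemma b_nonneg: "s \<in> {0..1} \<Longrightarrow> 0 \<le> v \<Longrightarrow> v \<le> p s \<Longrightarrow> 0 \<le> b v s"
  using b_mono[of s 0 v] b_zero[of s] by auto

lemma dutch_duration_range: "s \<in> {0..1} \<Longrightarrow> 0 \<le> v \<Longrightarrow> v \<le> p s \<Longrightarrow> 0 \<le> s - b v s \<and> s - b v s \<le> s"
  using b_nonneg[of s v] b_le[of s v] by auto

lemma dutch_duration_interior: "s \<in> {0..1} \<Longrightarrow> 0 < v \<Longrightarrow> v < p s \<Longrightarrow> 0 < s - b v s \<and> s - b v s < s"
  using b_strict_mono[of s 0 v] b_strict_mono[of s v "p s"] b_zero[of s] b_le[of s "p s"] p_range[of s]
  by auto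

lemma p_0: "p 0 = 0"
proof -
  have "p 0 < 1" using p_lt_1 s_tilde by auto
  then have "b (p 0) 0 = b 0 0" using b_cut[of 0] b_zero[of 0] by auto
  then show ?thesis using b_strict_mono[of 0 0 "p 0"] p_range[of 0] by force
qed

lemma p_1: "p 1 = 1"
  using p_eq_1[of 1] s_tilde by auto

definition hazard :: "real \<Rightarrow> real"
  where "hazard v = g_fn n F f v / G_fn n F v"

definition bid_slope :: "real \<Rightarrow> real \<Rightarrow> real"
  where "bid_slope s v = (c (s - b v s) * v - b v s) / (1 + c' (s - b v s) * v)"

lemma b_DERIV: "s \<in> {0..1} \<Longrightarrow> v \<in> {0<..<p s} \<Longrightarrow> DERIV (\<lambda>w. b w s) v :> hazard v * bid_slope s v"
  using b_ode by (simp add: hazard_def bid_slope_def)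

text \<open>A flat piece of \<open>F\<close> would make the bid \<open>b \<cdot> 1\<close> stationary, contradicting its strict
  monotonicity.\<close>
lemma F_strict_mono:
  assumes "0 \<le> x" "x < y" "y \<le> 1" shows "F x < F y"
proof (rule ccontr)
  assume "\<not> F x < F y"
  then have flat: "F z = F x" if "z \<in> {x..y}" for z
    using F_le[of x z] F_le[of z y] that assms by fastforce
  have "b y 1 \<le> b x 1"
  proof (rule DERIV_nonpos_imp_decreasing_open[OF less_imp_le[OF \<open>x < y\<close>]])
    fix z assume z: "x < z" "z < y"
    have "f z = 0"
    proof (rule DERIV_local_const[OF F_DERIV])
      show "\<forall>w. \<bar>z - w\<bar> < min (z - x) (y - z) \<longrightarrow> F z = F w"
      proof (intro allI impI)
        fix w assume "\<bar>z - w\<bar> < min (z - x) (y - z)"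
        then have wz: "w \<in> {x..y}" "z \<in> {x..y}" using z by (auto simp: abs_less_iff)
        show "F z = F w" using flat[OF wz(1)] flat[OF wz(2)] by simp
      qed
    qed (use z assms in auto)
    then show "\<exists>d. DERIV (\<lambda>w. b w 1) z :> d \<and> d \<le> 0"
      using b_DERIV[of 1 z] z assms p_1 by (auto simp: hazard_def g_fn_def)
  next
    show "continuous_on {x..y} (\<lambda>v. b v 1)"
      by (rule continuous_on_subset[OF b_cont[of 1]]) (use p_1 assms in auto)
  qed
  moreover have "b x 1 < b y 1" using b_strict_mono[of 1 x y] assms p_1 by auto
  ultimately show False by simp
qed

lemma F_pos: "0 < x \<Longrightarrow> x \<le> 1 \<Longrightarrow> 0 < F x"
  using F_strict_mono[of 0 x] F_0 by auto

lemma G_pos: "0 < v \<Longrightarrow> v \<le> 1 \<Longrightarrow> 0 < G_fn n F v"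
  unfolding G_fn_def using F_pos by auto

lemma G_DERIV: "0 < v \<Longrightarrow> v < 1 \<Longrightarrow> DERIV (\<lambda>w. G_fn n F w) v :> g_fn n F f v"
  using DERIV_power[OF F_DERIV, of v "n - 1"]
  by (simp add: G_fn_def g_fn_eq pow_density_def algebra_simps)

lemma hazard_ge_density:
  assumes "0 < v" "v \<le> 1" shows "f v \<le> hazard v"
proof -
  have "n - 1 = Suc (n - 2)" using n_ge_2 by simp
  then have "F v ^ (n - 1) = F v ^ (n - 2) * F v" by simp
  then have "hazard v = real (n - 1) * f v / F v"
    using F_pos[OF assms] by (simp add: hazard_def g_fn_def G_fn_def)
  moreover have "F v * f v \<le> real (n - 1) * f v"
    using F_range[of v] f_nonneg[of v] n_ge_2 assms by (intro mult_right_mono) auto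
  ultimately show ?thesis using F_pos[OF assms] by (simp add: le_divide_eq mult.commute)
qed

lemma hazard_nonneg: "0 < v \<Longrightarrow> v \<le> 1 \<Longrightarrow> 0 \<le> hazard v"
  using hazard_ge_density f_nonneg[of v] by force

lemma continuous_on_dutch_duration_comp:
  assumes "s \<in> {0..1}" "continuous_on {0..1} h"
  shows "continuous_on {0..p s} (\<lambda>w. h (s - b w s))"
proof (rule continuous_on_compose2[OF assms(2)])
  show "continuous_on {0..p s} (\<lambda>w. s - b w s)"
    by (intro continuous_intros b_cont assms(1))
  show "(\<lambda>w. s - b w s) ` {0..p s} \<subseteq> {0..1}"
    using dutch_duration_range[OF assms(1)] assms(1) by force
qed

lemma bid_slope_continuous:
  assumes s: "s \<in> {0..1}" shows "continuous_on {0..p s} (bid_slope s)"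
proof -
  have "1 + c' (s - b v s) * v \<noteq> 0" if "v \<in> {0..p s}" for v
    using ode_denominator_pos[of "s - b v s" v] dutch_duration_range[OF s, of v] that s p_range[OF s]
    by auto
  then show ?thesis unfolding bid_slope_def
    using continuous_on_dutch_duration_comp[OF s c_continuous]
      continuous_on_dutch_duration_comp[OF s c'_cont] b_cont[OF s]
    by (intro continuous_intros) auto
qed

text \<open>A Dutch phase started at a higher price lasts longer: the two durations start apart by
  \<open>s' - s\<close>, and wherever they would meet the bid ODE makes their difference increase.\<close>
lemma dutch_duration_strict_mono:
  assumes s: "0 \<le> s" "s < s'" "s' \<le> 1" and v: "0 \<le> v" "v \<le> p s" "v \<le> p s'"
  shows "s - b v s < s' - b v s'"
proof -
  define q where "q = min (p s) (p s')"
  have sI: "s \<in> {0..1}" "s' \<in> {0..1}" using s by auto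
  have q: "q \<le> p s" "q \<le> p s'" "q \<le> 1" "v \<in> {0..q}"
    using p_range[OF sI(1)] p_range[OF sI(2)] v by (auto simp: q_def)
  define e where "e w = (s' - b w s') - (s - b w s)" for w
  define \<beta> where "\<beta> w = bid_slope s w - bid_slope s' w" for w
  have e_cont: "continuous_on {0..q} e"
    unfolding e_def using continuous_on_subset[OF b_cont, of _ "{0..q}"] sI q
    by (intro continuous_intros) auto
  have \<beta>_cont: "continuous_on {0..q} \<beta>"
    unfolding \<beta>_def using continuous_on_subset[OF bid_slope_continuous, of _ "{0..q}"] sI q
    by (intro continuous_intros) auto
  have e_deriv: "DERIV e w :> hazard w * \<beta> w" if "w \<in> {0<..<q}" for w
  proof -
    have "DERIV e w :> (0 - hazard w * bid_slope s' w) - (0 - hazard w * bid_slope s w)"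
      unfolding e_def using that q by (intro DERIV_diff DERIV_const b_DERIV sI) auto
    then show ?thesis by (simp add: \<beta>_def algebra_simps)
  qed
  have "0 < e v"
  proof (rule pos_if_deriv_nonneg_left_of_zeros[OF e_cont])
    show "0 < e 0" using b_zero sI s by (simp add: e_def)
  next
    fix w assume w: "0 < w" "w \<le> q" "e w = 0"
    then have "s' - b w s' = s - b w s" by (simp add: e_def)
    then have "\<beta> w = (s' - s) / (1 + c' (s - b w s) * w)"
      by (simp add: \<beta>_def bid_slope_def diff_divide_distrib[symmetric])
    moreover have "0 < 1 + c' (s - b w s) * w"
      using ode_denominator_pos[of "s - b w s" w] dutch_duration_range[OF sI(1), of w] w q sI by auto
    ultimately have "0 < \<beta> w" using s by simp
    with \<beta>_cont w have "\<forall>\<^sub>F z in at_left w. 0 < \<beta> z \<and> z \<in> {0<..<w}"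
      by (intro eventually_pos_at_left_if_continuous) auto
    then show "\<forall>\<^sub>F z in at_left w. \<exists>d. DERIV e z :> d \<and> 0 \<le> d"
    proof (rule eventually_mono)
      fix z assume "0 < \<beta> z \<and> z \<in> {0<..<w}"
      then have z: "0 < \<beta> z" "z \<in> {0<..<q}" using w by auto
      then have "0 \<le> hazard z * \<beta> z" using hazard_nonneg[of z] q by simp
      then show "\<exists>d. DERIV e z :> d \<and> 0 \<le> d" using e_deriv[OF z(2)] by blast
    qed
  qed (use q in auto)
  then show ?thesis by (simp add: e_def)
qed

text \<open>Multiplied by \<open>G\<close>, the bid ODE becomes this exact derivative.\<close>
lemma weighted_dutch_surplus_DERIV:
  assumes t: "t \<in> {0..1}" and w: "0 < w" "w < p t"
  shows "DERIV (\<lambda>w. G_fn n F w * (c (t - b w t) * w - b w t)) w :> G_fn n F w * c (t - b w t)"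
proof -
  define N where "N = c (t - b w t) * w - b w t"
  define D where "D = 1 + c' (t - b w t) * w"
  define B where "B = hazard w * bid_slope t w"
  have w1: "w < 1" using w p_range[OF t] by auto
  have d: "0 < t - b w t" "t - b w t < 1" using dutch_duration_interior[OF t w] t by auto
  have b_deriv: "DERIV (\<lambda>w. b w t) w :> B"
    using b_DERIV[OF t] w by (simp add: B_def)
  have "DERIV (\<lambda>w. c (t - b w t)) w :> c' (t - b w t) * (0 - B)"
    using d by (intro DERIV_chain2[where f=c, OF c_DERIV] DERIV_diff DERIV_const b_deriv) auto
  then have "DERIV (\<lambda>w. G_fn n F w * (c (t - b w t) * w - b w t)) w :>
      g_fn n F f w * N + ((c' (t - b w t) * (0 - B)) * w + 1 * c (t - b w t) - B) * G_fn n F w"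
    unfolding N_def by (intro DERIV_mult DERIV_diff DERIV_ident b_deriv G_DERIV w w1)
  moreover have "G_fn n F w * (B * D) = g_fn n F f w * N"
    using G_pos[of w] ode_denominator_pos[of "t - b w t" w] d w w1
    by (simp add: B_def D_def N_def hazard_def bid_slope_def)
  ultimately show ?thesis by (simp add: D_def algebra_simps)
qed

lemma dutch_surplus_antimono:
  assumes s: "0 \<le> s" "s < s'" "s' \<le> 1" and v: "0 \<le> v" "v \<le> p s" "v \<le> p s'"
  shows "c (s' - b v s') * v - b v s' \<le> c (s - b v s) * v - b v s"
proof (cases "v = 0")
  case True
  then show ?thesis using b_zero s by auto
next
  case False
  have sI: "s \<in> {0..1}" "s' \<in> {0..1}" using s by auto
  have v1: "0 < v" "v \<le> 1" using False v p_range[OF sI(1)] by auto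
  define W where "W t w = G_fn n F w * (c (t - b w t) * w - b w t)" for t w
  have "W s' v - W s v \<le> W s' 0 - W s 0"
  proof (rule DERIV_nonpos_imp_decreasing_open[OF v(1)])
    fix z assume z: "0 < z" "z < v"
    have "c (s' - b z s') \<le> c (s - b z s)"
      using dutch_duration_strict_mono[OF s, of z] dutch_duration_range[OF sI(1), of z]
        dutch_duration_range[OF sI(2), of z] z v s by (intro c_antimono) auto
    then have "G_fn n F z * c (s' - b z s') - G_fn n F z * c (s - b z s) \<le> 0"
      using G_pos[of z] z v1 by (simp add: mult_left_mono)
    moreover have "DERIV (\<lambda>w. W s' w - W s w) z :> G_fn n F z * c (s' - b z s') - G_fn n F z * c (s - b z s)"
      unfolding W_def using z v by (intro DERIV_diff weighted_dutch_surplus_DERIV sI) auto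
    ultimately show "\<exists>d. DERIV (\<lambda>w. W s' w - W s w) z :> d \<and> d \<le> 0" by blast
  next
    have "continuous_on {0..v} (\<lambda>w. G_fn n F w)"
      unfolding G_fn_def by (rule continuous_on_subset[of "{0..1}"])
        (use v1 in \<open>auto intro!: continuous_intros F_continuous\<close>)
    moreover have "continuous_on {0..v} (\<lambda>w. c (t - b w t))" "continuous_on {0..v} (\<lambda>w. b w t)"
      if "t \<in> {s, s'}" for t
      using continuous_on_subset[OF continuous_on_dutch_duration_comp[OF _ c_continuous, of t]]
        continuous_on_subset[OF b_cont[of t]] that sI v by auto
    ultimately show "continuous_on {0..v} (\<lambda>w. W s' w - W s w)"
      unfolding W_def by (intro continuous_intros) auto
  qed
  moreover have "W t 0 = 0" for t using F_0 n_ge_2 by (simp add: W_def G_fn_def)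
  ultimately have "W s' v - W s v \<le> 0" by simp
  then have "G_fn n F v * ((c (s' - b v s') * v - b v s') - (c (s - b v s) * v - b v s)) \<le> 0"
    by (simp add: W_def right_diff_distrib)
  then show ?thesis using G_pos[OF v1] by (simp add: mult_le_0_iff)
qed

lemma dutch_bid_lower_bound:
  assumes s: "0 \<le> s" "s < s'" "s' \<le> 1" and v: "0 \<le> v" "v \<le> p s" "v \<le> p s'" "v < 1"
  shows "b v s - (s' - s) * v / (1 - v) \<le> b v s'"
proof -
  have sI: "s \<in> {0..1}" "s' \<in> {0..1}" using s by auto
  have "c (s - b v s) + (s - b v s) \<le> c (s' - b v s') + (s' - b v s')"
    using c_plus_id_mono dutch_duration_strict_mono[OF s v(1-3)]
      dutch_duration_range[OF sI(1) v(1,2)] dutch_duration_range[OF sI(2) v(1,3)] s by auto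
  then have "(c (s - b v s) - c (s' - b v s')) * v \<le> ((s' - b v s') - (s - b v s)) * v"
    using v by (intro mult_right_mono) auto
  with dutch_surplus_antimono[OF s v(1-3)] have "(b v s - b v s') * (1 - v) \<le> (s' - s) * v"
    by (simp add: algebra_simps)
  then have "b v s - b v s' \<le> (s' - s) * v / (1 - v)" using v by (simp add: pos_le_divide_eq)
  then show ?thesis by simp
qed

text \<open>If \<open>p\<close> stayed below \<open>L\<close>, then \<open>b (p s) s = s\<close> and the bid lower bound would give
  \<open>b L s_tilde \<ge> s_tilde\<close> in the limit \<open>s \<rightarrow> s_tilde\<close>, yet \<open>b L s_tilde < b 1 s_tilde \<le> s_tilde\<close>.\<close>
lemma cutoff_approaches_one:
  assumes "L < 1"
  obtains s where "0 < s" "s < s_tilde" "L < p s"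
proof (rule ccontr)
  assume "\<not> thesis"
  with that have p_le: "p s \<le> L" if "0 < s" "s < s_tilde" for s
    using that by force
  have "0 < L" using p_le[of "s_tilde / 2"] p_range[of "s_tilde / 2"] s_tilde by auto
  define K where "K = L / (1 - L)"
  have "0 \<le> K" using \<open>0 < L\<close> assms by (simp add: K_def)
  have p_tilde: "p s_tilde = 1" using p_eq_1 s_tilde by auto
  have bound: "s - (s_tilde - s) * K \<le> b L s_tilde" if s: "0 < s" "s < s_tilde" for s
  proof -
    have sI: "s \<in> {0..1}" using s s_tilde by auto
    have ps: "s \<le> p s" "p s \<le> L" using p_range[OF sI] p_le[OF s] by auto
    have "s - (s_tilde - s) * p s / (1 - p s) \<le> b (p s) s_tilde"
      using dutch_bid_lower_bound[of s s_tilde "p s"] b_cut[OF sI] s s_tilde ps p_tilde assms by auto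
    moreover have "p s / (1 - p s) \<le> K"
      unfolding K_def using ps s assms by (intro frac_le) auto
    then have "(s_tilde - s) * (p s / (1 - p s)) \<le> (s_tilde - s) * K"
      using s by (intro mult_left_mono) auto
    moreover have "b (p s) s_tilde \<le> b L s_tilde"
      using s_tilde ps s assms p_tilde by (intro b_mono) auto
    ultimately show ?thesis by simp
  qed
  have "((\<lambda>s. s - (s_tilde - s) * K) \<longlongrightarrow> s_tilde - (s_tilde - s_tilde) * K) (at_left s_tilde)"
    by (intro tendsto_intros)
  moreover have "\<forall>\<^sub>F s in at_left s_tilde. s - (s_tilde - s) * K \<le> b L s_tilde"
    using eventually_at_left_real[OF s_tilde(1)] by eventually_elim (use bound in auto)
  ultimately have "s_tilde \<le> b L s_tilde"
    by (intro tendsto_upperbound[where F="at_left s_tilde"]) (simp_all add: trivial_limit_at_left_real)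
  moreover have "b L s_tilde < b 1 s_tilde"
    using s_tilde assms \<open>0 < L\<close> p_tilde by (intro b_strict_mono) auto
  moreover have "b 1 s_tilde \<le> s_tilde" using b_le[of s_tilde 1] s_tilde p_tilde by auto
  ultimately show False by simp
qed

lemma dutch_bid_slope_ge:
  assumes s: "s \<in> {0..1}" and z: "0 < z" "z < p s" and "4 * s \<le> z"
  shows "f z * z / 2 \<le> hazard z * bid_slope s z"
proof -
  define N where "N = c (s - b z s) * z - b z s"
  define D where "D = 1 + c' (s - b z s) * z"
  have z1: "z < 1" using z p_range[OF s] by auto
  have d: "0 \<le> s - b z s" "s - b z s \<le> s" using dutch_duration_range[OF s, of z] z by auto
  have "1 - s \<le> c (s - b z s)" using one_minus_le_c[of "s - b z s"] d s by auto
  then have "(1 - s) * z \<le> c (s - b z s) * z" using z by (intro mult_right_mono) auto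
  moreover have "s * z \<le> s" using s z1 z by (simp add: mult_left_le)
  moreover have "b z s \<le> s" using b_le[OF s, of z] z by auto
  ultimately have "z / 2 \<le> N" using \<open>4 * s \<le> z\<close> by (simp add: N_def algebra_simps)
  moreover have "0 < D" "D \<le> 1"
    using ode_denominator_pos[of "s - b z s" z] ode_denominator_le_1[of "s - b z s" z] d s z z1
    by (auto simp: D_def)
  moreover have "z * D \<le> z" using z \<open>D \<le> 1\<close> by (simp add: mult_left_le)
  ultimately have "z / 2 \<le> N / D" by (simp add: le_divide_eq)
  moreover have "f z \<le> hazard z" "0 \<le> f z"
    using f_nonneg[of z] hazard_ge_density[of z] z z1 by auto
  ultimately have "f z * (z / 2) \<le> hazard z * (N / D)"
    using z by (intro mult_mono) auto
  then show ?thesis by (simp add: N_def D_def bid_slope_def)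
qed

lemma dutch_bid_increment:
  assumes s: "s \<in> {0..1}" and M: "0 < M" "M \<le> p s" and "8 * s \<le> M"
  shows "b (M / 2) s + M / 4 * (F M - F (M / 2)) \<le> b M s"
proof -
  have M1: "M \<le> 1" using M p_range[OF s] by auto
  define \<phi> where "\<phi> w = b w s - M / 4 * F w" for w
  have "\<phi> (M / 2) \<le> \<phi> M"
  proof (rule DERIV_nonneg_imp_increasing_open[of "M / 2" M \<phi>])
    fix z assume z: "M / 2 < z" "z < M"
    then have z': "0 < z" "z < p s" "z < 1" "4 * s \<le> z" using M M1 \<open>8 * s \<le> M\<close> by auto
    define B where "B = hazard z * bid_slope s z"
    have "f z * z / 2 \<le> B" unfolding B_def using z' by (intro dutch_bid_slope_ge s)
    moreover have "f z * (M / 4) \<le> f z * (z / 2)"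
      using z f_nonneg[of z] M1 by (intro mult_left_mono) auto
    ultimately have "0 \<le> B - M / 4 * f z" by (simp add: algebra_simps)
    moreover have "DERIV \<phi> z :> B - M / 4 * f z"
      unfolding \<phi>_def B_def using z' by (intro DERIV_diff DERIV_cmult b_DERIV s F_DERIV) auto
    ultimately show "\<exists>d. DERIV \<phi> z :> d \<and> 0 \<le> d" by blast
  next
    have "continuous_on {M / 2..M} (\<lambda>w. b w s)"
      by (rule continuous_on_subset[OF b_cont[OF s]]) (use M in auto)
    moreover have "continuous_on {M / 2..M} F"
      by (rule continuous_on_subset[OF F_continuous]) (use M M1 in auto)
    ultimately show "continuous_on {M / 2..M} \<phi>"
      unfolding \<phi>_def by (intro continuous_intros)
  qed (use M in auto)
  then show ?thesis by (simp add: \<phi>_def algebra_simps)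
qed

text \<open>If \<open>p\<close> stayed above \<open>L\<close>, the bids would rise by a fixed amount over \<open>[M/2, M]\<close>, although
  they never exceed \<open>s\<close>.\<close>
lemma cutoff_approaches_zero:
  assumes "0 < L"
  obtains s where "0 < s" "s < s_tilde" "p s < L"
proof (rule ccontr)
  assume "\<not> thesis"
  with that have p_ge: "L \<le> p s" if "0 < s" "s < s_tilde" for s
    using that by force
  define M where "M = min L 1"
  have M: "0 < M" "M \<le> 1" "M \<le> L" using assms by (auto simp: M_def)
  define \<eta> where "\<eta> = M / 4 * (F M - F (M / 2))"
  have "0 < \<eta>" unfolding \<eta>_def using F_strict_mono[of "M / 2" M] M by auto
  define s where "s = min (s_tilde / 2) (min (M / 8) (\<eta> / 2))"
  have s: "0 < s" "s < s_tilde" "8 * s \<le> M" "s \<le> \<eta> / 2"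
    using s_tilde M \<open>0 < \<eta>\<close> by (auto simp: s_def)
  then have sI: "s \<in> {0..1}" and "M \<le> p s" using s_tilde p_ge[of s] M by auto
  then have "b (M / 2) s + \<eta> \<le> b M s"
    unfolding \<eta>_def using s M by (intro dutch_bid_increment) auto
  moreover have "0 \<le> b (M / 2) s" using b_nonneg[OF sI, of "M / 2"] M \<open>M \<le> p s\<close> by auto
  moreover have "b M s \<le> s" using b_le[OF sI, of M] M \<open>M \<le> p s\<close> by auto
  ultimately show False using s \<open>0 < \<eta>\<close> by auto
qed

definition dutch_welfare :: "real \<Rightarrow> real \<Rightarrow> real"
  where "dutch_welfare s v = c (s - b v s) * v * pow_density n v"

text \<open>The first summand accounts for a highest value \<open>v\<close> that is the only one above the cutoff; its
  owner buys at the starting price at once.\<close>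
definition english_welfare :: "real \<Rightarrow> real \<Rightarrow> real"
  where "english_welfare s v = v * real n * f v *
    (F (p s) ^ (n - 1) + integral {p s..v} (\<lambda>x. c (m x s - s) * pow_density (n - 1) x))"

lemma english_duration:
  "s \<in> {0..1} \<Longrightarrow> x \<in> {p s..1} \<Longrightarrow>
    0 \<le> m x s - s \<and> m x s - s \<le> 1 \<and> c (m x s - s) * x = (m x s - s) + s"
  using m_range[of s x] m_eq[of s x] by auto

lemma english_duration_mono:
  assumes s: "s \<in> {0..1}" and xy: "p s \<le> x" "x \<le> y" "y \<le> 1"
  shows "m x s - s \<le> m y s - s"
proof (rule ccontr)
  assume "\<not> ?thesis"
  then have lt: "m y s - s < m x s - s" by simp
  have x: "0 \<le> m x s - s" "m x s - s \<le> 1" "c (m x s - s) * x = (m x s - s) + s"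
    using english_duration[OF s, of x] xy by auto
  have y: "0 \<le> m y s - s" "c (m y s - s) * y = (m y s - s) + s"
    using english_duration[OF s, of y] xy by auto
  have "c (m x s - s) \<le> c (m y s - s)" using c_antimono lt x y by auto
  moreover have "0 \<le> x" "0 \<le> c (m x s - s)" using xy p_range[OF s] s c_nonneg x by auto
  ultimately have "c (m x s - s) * x \<le> c (m y s - s) * y"
    using xy by (intro mult_mono) auto
  with x y lt show False by simp
qed

lemma english_payoff_antimono:
  "s \<in> {0..1} \<Longrightarrow> p s \<le> x \<Longrightarrow> x \<le> y \<Longrightarrow> y \<le> 1 \<Longrightarrow> c (m y s - s) \<le> c (m x s - s)"
  using english_duration_mono[of s x y] english_duration[of s x] english_duration[of s y] c_antimono
  by auto

lemma english_integrable:
  assumes s: "s \<in> {0..1}" and "p s \<le> a" "a \<le> a'" "a' \<le> 1"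
  shows "(\<lambda>x. c (m x s - s) * pow_density (n - 1) x) integrable_on {a..a'}"
proof -
  have "mono_on {a..a'} (\<lambda>x. - c (m x s - s))"
    using english_payoff_antimono[OF s] assms by (intro mono_onI) auto
  moreover have "continuous_on {a..a'} (pow_density (n - 1))"
    by (rule continuous_on_subset[OF pow_density_continuous]) (use assms p_range[OF s] s in auto)
  ultimately have "(\<lambda>x. - c (m x s - s) * pow_density (n - 1) x) integrable_on {a..a'}"
    by (rule integrable_mono_on_times_continuous)
  then show ?thesis using integrable_neg by fastforce
qed

lemma welfare_eq:
  assumes s: "s \<in> {0..1}"
  shows "EU_S_F n F f c b m p s = integral {0..p s} (dutch_welfare s) + integral {p s..1} (english_welfare s)"
proof -
  have "integral {0..p s} (pow_density (n - 1)) = F (p s) ^ (n - 1)"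
    using integral_pow_density[of 0 "p s" "n - 1"] p_range[OF s] s F_0 n_ge_2 by simp
  then have sole_bidder_part: "integral {0..p s} (\<lambda>x. v * h_fn n F f v x) = v * real n * f v * F (p s) ^ (n - 1)"
    for v
    by (simp add: h_fn_eq mult.assoc)
  have english_part: "integral {p s..v} (\<lambda>x. c (m x s - s) * v * h_fn n F f v x)
      = v * real n * f v * integral {p s..v} (\<lambda>x. c (m x s - s) * pow_density (n - 1) x)" for v
    by (simp add: h_fn_eq mult.assoc mult.left_commute)
  have "integral {0..p s} (\<lambda>x. v * h_fn n F f v x)
      + integral {p s..v} (\<lambda>x. c (m x s - s) * v * h_fn n F f v x) = english_welfare s v" for v
    unfolding sole_bidder_part english_part english_welfare_def by (simp add: distrib_left)
  moreover have "(\<lambda>v. c (s - b v s) * v * (real n * F v ^ (n - 1) * f v)) = dutch_welfare s"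
    by (simp add: fun_eq_iff dutch_welfare_def pow_density_def)
  ultimately show ?thesis by (simp only: EU_S_F_def)
qed

lemma dutch_welfare_continuous: "s \<in> {0..1} \<Longrightarrow> continuous_on {0..p s} (dutch_welfare s)"
  unfolding dutch_welfare_def
  using continuous_on_dutch_duration_comp[OF _ c_continuous, of s]
    continuous_on_subset[OF pow_density_continuous[of n], of "{0..p s}"] p_range[of s]
  by (auto intro!: continuous_intros)

lemma english_welfare_continuous:
  assumes s: "s \<in> {0..1}" shows "continuous_on {p s..1} (english_welfare s)"
proof -
  have "continuous_on {p s..1} (\<lambda>v. integral {p s..v} (\<lambda>x. c (m x s - s) * pow_density (n - 1) x))"
    using english_integrable[OF s] p_range[OF s] by (intro indefinite_integral_continuous_1) auto
  moreover have "continuous_on {p s..1} f"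
    by (rule continuous_on_subset[OF f_cont]) (use p_range[OF s] s in auto)
  ultimately show ?thesis unfolding english_welfare_def by (intro continuous_intros)
qed

lemma english_welfare_nonneg:
  assumes s: "s \<in> {0..1}" and v: "v \<in> {p s..1}"
  shows "0 \<le> english_welfare s v"
proof -
  have "0 \<le> integral {p s..v} (\<lambda>x. c (m x s - s) * pow_density (n - 1) x)"
  proof (rule integral_nonneg)
    show "(\<lambda>x. c (m x s - s) * pow_density (n - 1) x) integrable_on {p s..v}"
      using english_integrable[OF s] v by auto
    fix x assume "x \<in> {p s..v}"
    then show "0 \<le> c (m x s - s) * pow_density (n - 1) x"
      using english_duration[OF s, of x] c_nonneg pow_density_nonneg[of x] p_range[OF s] s v by auto
  qed
  then show ?thesis unfolding english_welfare_def
    using f_nonneg[of v] F_range[of "p s"] p_range[OF s] s v by auto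
qed

lemma dutch_phase_le_welfare:
  assumes s: "s \<in> {0..1}" shows "integral {0..p s} (dutch_welfare s) \<le> EU_S_F n F f c b m p s"
proof -
  have "0 \<le> integral {p s..1} (english_welfare s)"
    using english_welfare_continuous[OF s] english_welfare_nonneg[OF s]
    by (intro integral_nonneg integrable_continuous_interval) auto
  then show ?thesis using welfare_eq[OF s] by simp
qed

lemma dutch_welfare_le_pow_density:
  assumes s: "s \<in> {0..1}" and v: "0 \<le> v" "v \<le> p s"
  shows "dutch_welfare s v \<le> pow_density n v"
proof -
  have v1: "v \<le> 1" using v p_range[OF s] by auto
  have "0 \<le> c (s - b v s)" "c (s - b v s) \<le> 1"
    using dutch_duration_range[OF s v] s c_nonneg c_le_1 by auto
  then have "0 \<le> c (s - b v s) * v" "c (s - b v s) * v \<le> 1" using v v1 by (simp_all add: mult_le_one)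
  then show ?thesis unfolding dutch_welfare_def
    using mult_left_le_one_le[of "pow_density n v" "c (s - b v s) * v"] pow_density_nonneg[of v n] v v1
    by simp
qed

lemma welfare_dutch_auction_le:
  assumes P: "0 \<le> P" "P \<le> 1"
  shows "EU_S_F n F f c b m p 1 \<le> integral {0..P} (dutch_welfare 1) + (1 - F P ^ n)"
proof -
  have cont: "continuous_on {0..1} (dutch_welfare 1)" using dutch_welfare_continuous[of 1] p_1 by simp
  have "integral {P..1} (dutch_welfare 1) \<le> integral {P..1} (pow_density n)"
    using continuous_on_subset[OF cont, of "{P..1}"]
      continuous_on_subset[OF pow_density_continuous, of "{P..1}"] dutch_welfare_le_pow_density[of 1] p_1 P
    by (intro integral_le integrable_continuous_interval) auto
  also have "\<dots> = 1 - F P ^ n" using integral_pow_density[of P 1 n] P F_1 by simp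
  finally show ?thesis
    using welfare_eq[of 1] p_1 P
      Henstock_Kurzweil_Integration.integral_combine[OF _ _ integrable_continuous_interval[OF cont], of P]
    by simp
qed

lemma dutch_welfare_antimono_start:
  assumes s: "0 \<le> s" "s < s'" "s' \<le> 1" and v: "0 \<le> v" "v \<le> p s" "v \<le> p s'"
  shows "dutch_welfare s' v \<le> dutch_welfare s v"
proof -
  have sI: "s \<in> {0..1}" "s' \<in> {0..1}" using s by auto
  have "c (s' - b v s') \<le> c (s - b v s)"
    using dutch_duration_strict_mono[OF s v] dutch_duration_range[OF sI(1) v(1,2)]
      dutch_duration_range[OF sI(2) v(1,3)] s by (intro c_antimono) auto
  then show ?thesis unfolding dutch_welfare_def
    using pow_density_nonneg[of v n] v p_range[OF sI(1)] by (intro mult_right_mono) auto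
qed

lemma dutch_gain_near_zero:
  obtains v0 \<kappa> where "0 < v0" "v0 < 1" "0 < \<kappa>"
    "\<And>s v. 0 \<le> s \<Longrightarrow> s < s_tilde \<Longrightarrow> 0 \<le> v \<Longrightarrow> v \<le> v0 \<Longrightarrow> v \<le> p s \<Longrightarrow>
      c (1 - b v 1) + \<kappa> \<le> c (s - b v s)"
proof -
  have "continuous_on {0..1} (\<lambda>v. b v 1)" using b_cont[of 1] p_1 by simp
  moreover have "(0::real) \<in> {0..1}" "0 < (1 - s_tilde) / 2" using s_tilde by auto
  ultimately obtain \<delta> where "0 < \<delta>"
    and \<delta>: "\<forall>v\<in>{0..1}. dist v 0 < \<delta> \<longrightarrow> dist (b v 1) (b 0 1) < (1 - s_tilde) / 2"
    unfolding continuous_on_iff by blast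
  define v0 where "v0 = min (\<delta> / 2) (1 / 2)"
  define \<kappa> where "\<kappa> = c s_tilde - c ((1 + s_tilde) / 2)"
  show thesis
  proof (rule that)
    show "0 < v0" "v0 < 1" using \<open>0 < \<delta>\<close> by (auto simp: v0_def)
    show "0 < \<kappa>" unfolding \<kappa>_def using c_strict_antimono[of s_tilde "(1 + s_tilde) / 2"] s_tilde by auto
    fix s v assume s: "0 \<le> s" "s < s_tilde" and v: "0 \<le> v" "v \<le> v0" "v \<le> p s"
    have "v \<in> {0..1}" "dist v 0 < \<delta>" using v \<open>0 < \<delta>\<close> by (auto simp: v0_def)
    then have "dist (b v 1) (b 0 1) < (1 - s_tilde) / 2" using \<delta> by blast
    then have "b v 1 < (1 - s_tilde) / 2" using b_zero[of 1] by (simp add: dist_real_def abs_less_iff)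
    then have "c (1 - b v 1) \<le> c ((1 + s_tilde) / 2)"
      using b_nonneg[of 1 v] p_1 v s_tilde by (intro c_antimono) (auto simp: v0_def)
    moreover have "c s_tilde \<le> c (s - b v s)"
      using dutch_duration_range[of s v] s v s_tilde by (intro c_antimono) auto
    ultimately show "c (1 - b v 1) + \<kappa> \<le> c (s - b v s)" by (simp add: \<kappa>_def)
  qed
qed

lemma integral_id_pow_density_pos:
  assumes "0 < a" "a \<le> 1" shows "0 < integral {0..a} (\<lambda>v. v * pow_density n v)"
proof -
  have cont: "continuous_on {0..a} (\<lambda>v. v * pow_density n v)"
    using continuous_on_subset[OF pow_density_continuous[of n], of "{0..a}"] assms
    by (auto intro!: continuous_intros)
  have "0 \<le> integral {0..a/2} (\<lambda>v. v * pow_density n v)"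
    using continuous_on_subset[OF cont, of "{0..a/2}"] pow_density_nonneg assms
    by (intro integral_nonneg integrable_continuous_interval) auto
  moreover have "a / 2 * (F a ^ n - F (a/2) ^ n) \<le> integral {a/2..a} (\<lambda>v. v * pow_density n v)"
  proof (rule has_integral_le[OF has_integral_mult_right[OF has_integral_pow_density]])
    show "((\<lambda>v. v * pow_density n v) has_integral integral {a/2..a} (\<lambda>v. v * pow_density n v)) {a/2..a}"
      using continuous_on_subset[OF cont, of "{a/2..a}"] assms
      by (intro integrable_integral integrable_continuous_interval) auto
  next
    fix x assume "x \<in> {a/2..a}"
    then show "a / 2 * pow_density n x \<le> x * pow_density n x"
      using pow_density_nonneg[of x n] assms by (intro mult_right_mono) auto
  qed (use assms in auto)
  moreover have "F (a/2) ^ n < F a ^ n"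
    using F_strict_mono[of "a/2" a] F_range[of "a/2"] assms n_ge_2 by (intro power_strict_mono) auto
  then have "0 < a / 2 * (F a ^ n - F (a/2) ^ n)" using assms by simp
  moreover have "integral {0..a} (\<lambda>v. v * pow_density n v)
      = integral {0..a/2} (\<lambda>v. v * pow_density n v) + integral {a/2..a} (\<lambda>v. v * pow_density n v)"
    using Henstock_Kurzweil_Integration.integral_combine[OF _ _ integrable_continuous_interval[OF cont], of "a/2"] assms by simp
  ultimately show ?thesis by linarith
qed

lemma dutch_phase_gain:
  assumes s: "0 \<le> s" "s < s_tilde" and v0: "0 \<le> v0" "v0 \<le> p s"
    and gain: "\<And>v. 0 \<le> v \<Longrightarrow> v \<le> v0 \<Longrightarrow> c (1 - b v 1) + \<kappa> \<le> c (s - b v s)"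
  shows "integral {0..p s} (dutch_welfare 1) + \<kappa> * integral {0..v0} (\<lambda>v. v * pow_density n v)
    \<le> integral {0..p s} (dutch_welfare s)"
proof -
  have sI: "s \<in> {0..1}" and P1: "p s \<le> 1" using s s_tilde p_range[of s] by auto
  define \<Delta> where "\<Delta> v = dutch_welfare s v - dutch_welfare 1 v" for v
  have "continuous_on {0..p s} (dutch_welfare 1)"
    by (rule continuous_on_subset[OF dutch_welfare_continuous[of 1]]) (use P1 p_1 in auto)
  then have "continuous_on {0..p s} \<Delta>"
    unfolding \<Delta>_def using dutch_welfare_continuous[OF sI] by (intro continuous_intros)
  then have int: "\<Delta> integrable_on {0..p s}" by (rule integrable_continuous_interval)
  have "\<kappa> * integral {0..v0} (\<lambda>v. v * pow_density n v) \<le> integral {0..v0} \<Delta>"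
  proof (subst integral_mult_right[symmetric], rule integral_le)
    show "(\<lambda>v. \<kappa> * (v * pow_density n v)) integrable_on {0..v0}"
      using continuous_on_subset[OF pow_density_continuous[of n], of "{0..v0}"] v0 P1
      by (intro integrable_continuous_interval continuous_intros) auto
    show "\<Delta> integrable_on {0..v0}" by (rule integrable_subinterval_real[OF int]) (use v0 in auto)
    fix v assume v: "v \<in> {0..v0}"
    then have "\<kappa> * (v * pow_density n v) \<le> (c (s - b v s) - c (1 - b v 1)) * (v * pow_density n v)"
      using gain[of v] pow_density_nonneg[of v n] v0 P1 by (intro mult_right_mono) auto
    then show "\<kappa> * (v * pow_density n v) \<le> \<Delta> v" by (simp add: \<Delta>_def dutch_welfare_def algebra_simps)
  qed
  moreover have "0 \<le> integral {v0..p s} \<Delta>"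
  proof (rule integral_nonneg)
    show "\<Delta> integrable_on {v0..p s}" by (rule integrable_subinterval_real[OF int]) (use v0 in auto)
    fix v assume "v \<in> {v0..p s}"
    then show "0 \<le> \<Delta> v" unfolding \<Delta>_def
      using dutch_welfare_antimono_start[of s 1 v] s s_tilde v0 P1 p_1 by auto
  qed
  moreover have "integral {0..p s} \<Delta> = integral {0..v0} \<Delta> + integral {v0..p s} \<Delta>"
    using Henstock_Kurzweil_Integration.integral_combine[OF _ _ int, of v0] v0 by simp
  moreover have "integral {0..p s} \<Delta> = integral {0..p s} (dutch_welfare s) - integral {0..p s} (dutch_welfare 1)"
    unfolding \<Delta>_def using dutch_welfare_continuous[OF sI] \<open>continuous_on {0..p s} (dutch_welfare 1)\<close>
    by (intro integral_diff integrable_continuous_interval)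
  ultimately show ?thesis by linarith
qed

lemma welfare_exceeds_dutch:
  obtains s where "0 < s" "s < s_tilde" "EU_S_F n F f c b m p 1 < EU_S_F n F f c b m p s"
proof -
  obtain v0 \<kappa> where v0: "0 < v0" "v0 < 1" "0 < \<kappa>"
    and gain: "\<And>s v. 0 \<le> s \<Longrightarrow> s < s_tilde \<Longrightarrow> 0 \<le> v \<Longrightarrow> v \<le> v0 \<Longrightarrow> v \<le> p s \<Longrightarrow>
      c (1 - b v 1) + \<kappa> \<le> c (s - b v s)"
    using dutch_gain_near_zero by blast
  define \<gamma> where "\<gamma> = \<kappa> * integral {0..v0} (\<lambda>v. v * pow_density n v)"
  have "0 < \<gamma>" using integral_id_pow_density_pos[of v0] v0 by (simp add: \<gamma>_def)
  have "continuous_on {0..1} (\<lambda>x. F x ^ n)" by (intro continuous_intros F_continuous)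
  moreover have "(1::real) \<in> {0..1}" by simp
  ultimately obtain \<delta> where "0 < \<delta>"
    and \<delta>: "\<forall>x\<in>{0..1}. dist x 1 < \<delta> \<longrightarrow> dist (F x ^ n) (F 1 ^ n) < \<gamma>"
    using \<open>0 < \<gamma>\<close> unfolding continuous_on_iff by blast
  define L where "L = max v0 (1 - \<delta> / 2)"
  have L: "v0 \<le> L" "L < 1" "1 - L < \<delta>" using v0 \<open>0 < \<delta>\<close> by (auto simp: L_def)
  obtain s where s: "0 < s" "s < s_tilde" "L < p s" using cutoff_approaches_one[OF L(2)] by blast
  have sI: "s \<in> {0..1}" using s s_tilde by auto
  have P: "v0 \<le> p s" "p s \<le> 1" using L s p_range[OF sI] by auto
  have "dist (F L ^ n) (F 1 ^ n) < \<gamma>" using \<delta> L v0 by (auto simp: dist_real_def)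
  moreover have "F L ^ n \<le> F (p s) ^ n"
    using F_le[of L "p s"] F_range[of L] L s P v0 by (intro power_mono) auto
  ultimately have tail_small: "1 - F (p s) ^ n < \<gamma>" using F_1 by (simp add: dist_real_def)
  have "EU_S_F n F f c b m p 1 < integral {0..p s} (dutch_welfare 1) + \<gamma>"
    using welfare_dutch_auction_le[of "p s"] tail_small P v0 by simp
  also have "\<dots> \<le> integral {0..p s} (dutch_welfare s)"
    unfolding \<gamma>_def using s P v0 gain[of s] by (intro dutch_phase_gain) auto
  also have "\<dots> \<le> EU_S_F n F f c b m p s" by (rule dutch_phase_le_welfare[OF sI])
  finally show thesis using s that by blast
qed

text \<open>Starting the English clock at \<open>s\<close> rather than \<open>0\<close> shortens the English phase by at least
  \<open>s / 2\<close>, which by convexity of \<open>c\<close> is worth at least \<open>- c' 1 * s / 2\<close>.\<close>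
lemma english_time_saving:
  assumes s: "0 < s" "s \<le> 1" and x: "p s \<le> x" "x \<le> 1"
  shows "- c' 1 * s / 2 \<le> c (m x s - s) - c (m x 0)"
proof -
  have sI: "s \<in> {0..1}" and zI: "(0::real) \<in> {0..1}" using s by auto
  define ds where "ds = m x s - s"
  define d0 where "d0 = m x 0"
  have hs: "0 \<le> ds" "ds \<le> 1" "c ds * x = ds + s" using english_duration[OF sI, of x] x by (auto simp: ds_def)
  have "0 \<le> x" using x p_range[OF sI] s by auto
  then have h0: "0 \<le> d0" "d0 \<le> 1" "c d0 * x = d0" using english_duration[OF zI, of x] x p_0 by (auto simp: d0_def)
  have "ds \<le> d0"
  proof (rule ccontr)
    assume "\<not> ds \<le> d0"
    then have "c ds * x \<le> c d0 * x" using c_antimono hs h0 \<open>0 \<le> x\<close> by (intro mult_right_mono) auto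
    with hs h0 s \<open>\<not> ds \<le> d0\<close> show False by simp
  qed
  then have "0 \<le> c ds - c d0" "c ds + ds \<le> c d0 + d0"
    using c_antimono c_plus_id_mono hs h0 by auto
  moreover from this have "(c ds - c d0) * x \<le> c ds - c d0" using x \<open>0 \<le> x\<close> by (simp add: mult_left_le)
  ultimately have "s \<le> 2 * (d0 - ds)" using hs h0 by (simp add: left_diff_distrib)
  moreover have "- c' 1 * (d0 - ds) \<le> c ds - c d0" using c_decrease_ge \<open>ds \<le> d0\<close> hs h0 by auto
  moreover have "- c' 1 * (s / 2) \<le> - c' 1 * (d0 - ds)"
    using c'_neg[of 1] calculation(1) by (intro mult_left_mono) auto
  ultimately have "- c' 1 * (s / 2) \<le> c ds - c d0" by linarith
  then show ?thesis by (simp add: ds_def d0_def)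
qed

lemma english_integral_le:
  assumes s: "s \<in> {0..1}" and a: "p s \<le> a" "a \<le> a'" "a' \<le> 1"
  shows "integral {a..a'} (\<lambda>x. c (m x s - s) * pow_density (n - 1) x) \<le> F a' ^ (n - 1) - F a ^ (n - 1)"
proof -
  have a0: "0 \<le> a" using a p_range[OF s] s by auto
  have "integral {a..a'} (\<lambda>x. c (m x s - s) * pow_density (n - 1) x) \<le> integral {a..a'} (pow_density (n - 1))"
  proof (rule integral_le)
    show "(\<lambda>x. c (m x s - s) * pow_density (n - 1) x) integrable_on {a..a'}"
      using english_integrable[OF s a] .
    show "pow_density (n - 1) integrable_on {a..a'}"
      using has_integral_pow_density[OF a0 a(2,3)] by blast
    fix x assume x: "x \<in> {a..a'}"
    then have "c (m x s - s) \<le> 1" using english_duration[OF s, of x] c_le_1 a by auto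
    then show "c (m x s - s) * pow_density (n - 1) x \<le> pow_density (n - 1) x"
      using mult_right_mono[of "c (m x s - s)" 1 "pow_density (n - 1) x"] pow_density_nonneg[of x "n - 1"] x a0 a
      by simp
  qed
  then show ?thesis using integral_pow_density[OF a0 a(2,3)] by simp
qed

lemma english_welfare_zero_le:
  assumes v: "0 \<le> v" "v \<le> 1" shows "english_welfare 0 v \<le> v * pow_density n v"
proof -
  have zero: "F 0 ^ (n - 1) = 0" using F_0 n_ge_2 by simp
  have "integral {0..v} (\<lambda>x. c (m x 0 - 0) * pow_density (n - 1) x) \<le> F v ^ (n - 1) - F 0 ^ (n - 1)"
    using english_integral_le[of 0 0 v] v p_0 by simp
  then have "integral {0..v} (\<lambda>x. c (m x 0 - 0) * pow_density (n - 1) x) \<le> F v ^ (n - 1)"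
    using zero by linarith
  moreover have "english_welfare 0 v = v * real n * f v * integral {0..v} (\<lambda>x. c (m x 0 - 0) * pow_density (n - 1) x)"
    unfolding english_welfare_def p_0 zero by simp
  ultimately have "english_welfare 0 v \<le> v * real n * f v * F v ^ (n - 1)"
    using v f_nonneg[of v] by (simp add: mult_left_mono)
  also have "\<dots> = v * pow_density n v" by (simp add: pow_density_def)
  finally show ?thesis .
qed

lemma english_integral_gain:
  assumes s: "0 < s" "s \<le> 1" and v: "p s \<le> v" "v \<le> 1"
  shows "integral {p s..v} (\<lambda>x. c (m x 0 - 0) * pow_density (n - 1) x)
      + - c' 1 * s / 2 * (F v ^ (n - 1) - F (p s) ^ (n - 1))
    \<le> integral {p s..v} (\<lambda>x. c (m x s - s) * pow_density (n - 1) x)"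
proof -
  define k where "k = pow_density (n - 1)"
  define \<kappa> where "\<kappa> = - c' 1 * s / 2"
  have sI: "s \<in> {0..1}" and zI: "(0::real) \<in> {0..1}" using s by auto
  have P: "0 \<le> p s" using p_range[OF sI] s by auto
  have k_int: "k integrable_on {p s..v}" and k_eq: "integral {p s..v} k = F v ^ (n - 1) - F (p s) ^ (n - 1)"
    unfolding k_def using has_integral_pow_density[of "p s" v "n - 1"] integral_pow_density P v by auto
  have int_s: "(\<lambda>x. c (m x s - s) * k x) integrable_on {p s..v}"
    unfolding k_def using english_integrable[OF sI, of "p s" v] v by auto
  have "integral {p s..v} (\<lambda>x. c (m x 0 - 0) * k x) \<le> integral {p s..v} (\<lambda>x. c (m x s - s) * k x - \<kappa> * k x)"
  proof (rule integral_le)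
    show "(\<lambda>x. c (m x 0 - 0) * k x) integrable_on {p s..v}"
      unfolding k_def using english_integrable[OF zI, of "p s" v] p_0 P v by simp
    show "(\<lambda>x. c (m x s - s) * k x - \<kappa> * k x) integrable_on {p s..v}"
      using int_s k_int by (intro integrable_diff integrable_on_mult_right)
    fix x assume x: "x \<in> {p s..v}"
    then have "c (m x 0 - 0) \<le> c (m x s - s) - \<kappa>"
      using english_time_saving[OF s, of x] v by (simp add: \<kappa>_def)
    then have "c (m x 0 - 0) * k x \<le> (c (m x s - s) - \<kappa>) * k x"
      using pow_density_nonneg[of x "n - 1"] x P v by (intro mult_right_mono) (auto simp: k_def)
    then show "c (m x 0 - 0) * k x \<le> c (m x s - s) * k x - \<kappa> * k x"
      by (simp add: algebra_simps)
  qed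
  also have "\<dots> = integral {p s..v} (\<lambda>x. c (m x s - s) * k x) - \<kappa> * (F v ^ (n - 1) - F (p s) ^ (n - 1))"
    using int_s k_int by (simp add: integral_diff integrable_on_mult_right k_eq)
  finally show ?thesis unfolding k_def \<kappa>_def by linarith
qed

lemma english_welfare_gain:
  assumes s: "0 < s" "s \<le> 1" and v: "p s \<le> v" "v \<le> 1"
  shows "english_welfare 0 v + - c' 1 * s / 2 * (v * (pow_density n v - real n * F (p s) ^ (n - 1) * f v))
    \<le> english_welfare s v"
proof -
  define k where "k = pow_density (n - 1)"
  define t where "t = F (p s) ^ (n - 1)"
  have sI: "s \<in> {0..1}" and zI: "(0::real) \<in> {0..1}" using s by auto
  have P: "0 \<le> p s" "p s \<le> v" using p_range[OF sI] s v by auto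
  have zero: "F 0 ^ (n - 1) = 0" using F_0 n_ge_2 by simp
  have int0: "(\<lambda>x. c (m x 0 - 0) * k x) integrable_on {0..v}"
    unfolding k_def using english_integrable[OF zI, of 0 v] p_0 P v by simp
  have "integral {0..p s} (\<lambda>x. c (m x 0 - 0) * k x) \<le> t - F 0 ^ (n - 1)"
    unfolding k_def t_def using english_integral_le[OF zI, of 0 "p s"] p_0 P v by simp
  moreover have "integral {0..v} (\<lambda>x. c (m x 0 - 0) * k x)
      = integral {0..p s} (\<lambda>x. c (m x 0 - 0) * k x) + integral {p s..v} (\<lambda>x. c (m x 0 - 0) * k x)"
    using Henstock_Kurzweil_Integration.integral_combine[OF _ _ int0, of "p s"] P by simp
  ultimately have "integral {0..v} (\<lambda>x. c (m x 0 - 0) * k x)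
      \<le> t + integral {p s..v} (\<lambda>x. c (m x s - s) * k x) - - c' 1 * s / 2 * (F v ^ (n - 1) - t)"
    using english_integral_gain[OF s v] zero unfolding k_def t_def by linarith
  then have "v * real n * f v * integral {0..v} (\<lambda>x. c (m x 0 - 0) * k x) \<le> v * real n * f v *
      (t + integral {p s..v} (\<lambda>x. c (m x s - s) * k x) - - c' 1 * s / 2 * (F v ^ (n - 1) - t))"
    using f_nonneg[of v] P v by (intro mult_left_mono) auto
  moreover have "english_welfare 0 v = v * real n * f v * integral {0..v} (\<lambda>x. c (m x 0 - 0) * k x)"
    unfolding english_welfare_def p_0 zero k_def by simp
  ultimately show ?thesis
    by (simp add: english_welfare_def k_def t_def pow_density_def algebra_simps)
qed

lemma english_gain_integral_ge:
  assumes P: "0 \<le> P" "P \<le> 1 / 2"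
  shows "(1 - F (1/2) ^ n - real n * F P ^ (n - 1)) / 2
    \<le> integral {P..1} (\<lambda>v. v * (pow_density n v - real n * F P ^ (n - 1) * f v))"
proof -
  define t where "t = F P ^ (n - 1)"
  define T where "T v = v * (pow_density n v - real n * t * f v)" for v
  have T_cont: "continuous_on {0..1} T"
    unfolding T_def by (intro continuous_intros pow_density_continuous f_cont)
  have T_int: "T integrable_on {a..a'}" if "0 \<le> a" "a' \<le> 1" for a a'
    using continuous_on_subset[OF T_cont, of "{a..a'}"] that by (intro integrable_continuous_interval) auto
  have t: "0 \<le> t" "t \<le> F v ^ (n - 1)" if "P \<le> v" "v \<le> 1" for v
    unfolding t_def using F_range[of P] F_le[of P v] P that by (auto intro: power_mono)
  have weight_eq: "pow_density n v - real n * t * f v = real n * f v * (F v ^ (n - 1) - t)" for v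
    by (simp add: pow_density_def algebra_simps)
  have "0 \<le> integral {P..1/2} T"
  proof (rule integral_nonneg[OF T_int])
    fix v assume v: "v \<in> {P..1/2}"
    then show "0 \<le> T v" unfolding T_def weight_eq using t[of v] f_nonneg[of v] P by auto
  qed (use P in auto)
  moreover have "((\<lambda>v. 1/2 * (pow_density n v - real n * t * f v)) has_integral
      1/2 * ((1 - F (1/2) ^ n) - real n * t * (1 - F (1/2)))) {1/2..1}"
    using has_integral_pow_density[of "1/2" 1 n] has_integral_pow_density[of "1/2" 1 1]
    unfolding pow_density_1 F_1 by (intro has_integral_mult_right has_integral_diff) auto
  then have "1/2 * ((1 - F (1/2) ^ n) - real n * t * (1 - F (1/2))) \<le> integral {1/2..1} T"
  proof (rule has_integral_le[OF _ integrable_integral[OF T_int]])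
    fix v :: real assume v: "v \<in> {1/2..1}"
    then show "1/2 * (pow_density n v - real n * t * f v) \<le> T v"
      unfolding T_def weight_eq using t[of v] f_nonneg[of v] P
      by (intro mult_right_mono) (auto intro: mult_nonneg_nonneg)
  qed auto
  moreover have "real n * t * (1 - F (1/2)) \<le> real n * t"
    using F_range[of "1/2"] t[of 1] P by (simp add: mult_left_le)
  moreover have "integral {P..1} T = integral {P..1/2} T + integral {1/2..1} T"
    using Henstock_Kurzweil_Integration.integral_combine[OF _ _ T_int[of P 1], of "1/2"] P by simp
  ultimately have "(1 - F (1/2) ^ n - real n * t) / 2 \<le> integral {P..1} T" by argo
  then show ?thesis by (simp only: T_def[abs_def] t_def)
qed

lemma dutch_welfare_ge:
  assumes s: "s \<in> {0..1}" and v: "0 \<le> v" "v \<le> p s"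
  shows "v * pow_density n v - s * pow_density n v \<le> dutch_welfare s v"
proof -
  have v1: "v \<le> 1" using v p_range[OF s] by auto
  have "1 - s \<le> c (s - b v s)"
    using one_minus_le_c[of "s - b v s"] dutch_duration_range[OF s v] s by auto
  then have "(1 - s) * (v * pow_density n v) \<le> c (s - b v s) * (v * pow_density n v)"
    using pow_density_nonneg[of v n] v v1 by (intro mult_right_mono) auto
  moreover have "s * (v * pow_density n v) \<le> s * pow_density n v"
    using pow_density_nonneg[of v n] v v1 s by (intro mult_left_mono) (auto simp: mult_left_le_one_le)
  ultimately show ?thesis by (simp add: dutch_welfare_def algebra_simps)
qed

lemma welfare_minus_english_eq:
  assumes s: "s \<in> {0..1}"
  shows "EU_S_F n F f c b m p s - EU_S_F n F f c b m p 0
    = integral {0..p s} (\<lambda>v. dutch_welfare s v - english_welfare 0 v)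
    + integral {p s..1} (\<lambda>v. english_welfare s v - english_welfare 0 v)"
proof -
  have P: "0 \<le> p s" "p s \<le> 1" using p_range[OF s] s by auto
  have E0_cont: "continuous_on {0..1} (english_welfare 0)"
    using english_welfare_continuous[of 0] p_0 by simp
  have E0_int: "english_welfare 0 integrable_on {a..a'}" if "0 \<le> a" "a' \<le> 1" for a a' :: real
    by (intro integrable_continuous_interval continuous_on_subset[OF E0_cont]) (use that in auto)
  have "EU_S_F n F f c b m p 0 = integral {0..p s} (english_welfare 0) + integral {p s..1} (english_welfare 0)"
    using welfare_eq[of 0] p_0 P Henstock_Kurzweil_Integration.integral_combine[OF _ _ E0_int[of 0 1], of "p s"]
    by simp
  then show ?thesis
    using welfare_eq[OF s] P E0_int[of 0 "p s"] E0_int[of "p s" 1]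
      dutch_welfare_continuous[OF s] english_welfare_continuous[OF s]
    by (simp add: integral_diff integrable_continuous_interval)
qed

lemma welfare_gain_over_english:
  assumes s: "0 < s" "s < s_tilde" and P: "p s \<le> 1 / 2"
  shows "- c' 1 * s / 4 * (1 - F (1/2) ^ n - real n * F (p s) ^ (n - 1)) - s * F (p s) ^ n
    \<le> EU_S_F n F f c b m p s - EU_S_F n F f c b m p 0"
proof -
  have sI: "s \<in> {0..1}" using s s_tilde by auto
  have P0: "0 \<le> p s" using p_range[OF sI] s by auto
  have E0_cont: "continuous_on {0..1} (english_welfare 0)"
    using english_welfare_continuous[of 0] p_0 by simp
  have int: "g integrable_on {a..a'}" if "continuous_on {0..1} g" "0 \<le> a" "a' \<le> 1" for g :: "real \<Rightarrow> real" and a a'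
    by (intro integrable_continuous_interval continuous_on_subset[OF that(1)]) (use that in auto)
  have Is_int: "dutch_welfare s integrable_on {0..p s}"
    using dutch_welfare_continuous[OF sI] by (rule integrable_continuous_interval)
  have Es_int: "english_welfare s integrable_on {p s..1}"
    using english_welfare_continuous[OF sI] by (rule integrable_continuous_interval)
  have "- s * F (p s) ^ n \<le> integral {0..p s} (\<lambda>v. dutch_welfare s v - english_welfare 0 v)"
  proof -
    have "integral {0..p s} (pow_density n) = F (p s) ^ n"
      using integral_pow_density[of 0 "p s" n] P0 P F_0 n_ge_2 by simp
    moreover have "integral {0..p s} (\<lambda>v. - s * pow_density n v)
        \<le> integral {0..p s} (\<lambda>v. dutch_welfare s v - english_welfare 0 v)"
      using int[OF pow_density_continuous, of 0 "p s"] Is_int int[OF E0_cont, of 0 "p s"] P P0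
        dutch_welfare_ge[OF sI] english_welfare_zero_le
      by (intro integral_le integrable_diff integrable_on_mult_right) (fastforce simp: algebra_simps)+
    ultimately show ?thesis by simp
  qed
  moreover have "- c' 1 * s / 2 * integral {p s..1} (\<lambda>v. v * (pow_density n v - real n * F (p s) ^ (n - 1) * f v))
      \<le> integral {p s..1} (\<lambda>v. english_welfare s v - english_welfare 0 v)"
  proof (subst integral_mult_right[symmetric], rule integral_le)
    show "(\<lambda>v. - c' 1 * s / 2 * (v * (pow_density n v - real n * F (p s) ^ (n - 1) * f v))) integrable_on {p s..1}"
      using P0 by (intro int continuous_intros pow_density_continuous f_cont) auto
    show "(\<lambda>v. english_welfare s v - english_welfare 0 v) integrable_on {p s..1}"
      using Es_int int[OF E0_cont, of "p s" 1] P0 by (intro integrable_diff) auto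
  qed (use english_welfare_gain[OF s(1)] sI in \<open>auto simp: algebra_simps\<close>)
  moreover have "(1 - F (1/2) ^ n - real n * F (p s) ^ (n - 1)) / 2
      \<le> integral {p s..1} (\<lambda>v. v * (pow_density n v - real n * F (p s) ^ (n - 1) * f v))"
    using P0 P by (rule english_gain_integral_ge)
  then have "- c' 1 * s / 2 * ((1 - F (1/2) ^ n - real n * F (p s) ^ (n - 1)) / 2)
      \<le> - c' 1 * s / 2 * integral {p s..1} (\<lambda>v. v * (pow_density n v - real n * F (p s) ^ (n - 1) * f v))"
    using c'_neg[of 1] s by (intro mult_left_mono) (auto simp: mult_nonpos_nonneg)
  ultimately show ?thesis using welfare_minus_english_eq[OF sI] by (simp add: algebra_simps)
qed

lemma welfare_exceeds_english:
  obtains s where "0 < s" "s < s_tilde" "EU_S_F n F f c b m p 0 < EU_S_F n F f c b m p s"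
proof -
  define \<kappa> where "\<kappa> = - c' 1"
  define Q where "Q = 1 - F (1/2) ^ n"
  define \<epsilon> where "\<epsilon> = \<kappa> * Q / (4 + \<kappa> * real n)"
  have "0 < \<kappa>" using c'_neg[of 1] by (simp add: \<kappa>_def)
  have "F (1/2) < 1" using F_strict_mono[of "1/2" 1] F_1 by simp
  then have "0 < Q" using F_range[of "1/2"] n_ge_2 by (simp add: Q_def power_less_one_iff)
  then have "0 < \<epsilon>" using \<open>0 < \<kappa>\<close> by (simp add: \<epsilon>_def add_pos_nonneg)
  moreover have "(0::real) \<in> {0..1}" by simp
  ultimately obtain \<delta> where "0 < \<delta>" and \<delta>: "\<forall>x\<in>{0..1}. dist x 0 < \<delta> \<longrightarrow> dist (F x) (F 0) < \<epsilon>"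
    using F_continuous unfolding continuous_on_iff by blast
  obtain s where s: "0 < s" "s < s_tilde" "p s < min \<delta> (1/2)"
    using cutoff_approaches_zero[of "min \<delta> (1/2)"] \<open>0 < \<delta>\<close> by auto
  define t where "t = F (p s)"
  have P: "0 \<le> p s" using p_range[of s] s s_tilde by auto
  have t: "0 \<le> t" "t \<le> 1" "t < \<epsilon>"
    using \<delta> F_range[of "p s"] F_0 s P by (auto simp: t_def dist_real_def)
  have "F (p s) ^ n \<le> t" "F (p s) ^ (n - 1) \<le> t"
    using power_decreasing[of 1 _ t] t n_ge_2 by (auto simp: t_def)
  then have "\<kappa> * s / 4 * (Q - real n * t) \<le> \<kappa> * s / 4 * (Q - real n * F (p s) ^ (n - 1))"
    "s * F (p s) ^ n \<le> s * t"
    using s \<open>0 < \<kappa>\<close> by (auto intro!: mult_left_mono)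
  then have gain: "\<kappa> * s / 4 * (Q - real n * t) - s * t
      \<le> EU_S_F n F f c b m p s - EU_S_F n F f c b m p 0"
    using welfare_gain_over_english[OF s(1,2)] s unfolding \<kappa>_def Q_def by linarith
  have "t * (4 + \<kappa> * real n) < \<kappa> * Q"
    using t(3) \<open>0 < \<kappa>\<close> by (simp add: \<epsilon>_def pos_less_divide_eq add_pos_nonneg)
  then have "0 < s / 4 * (\<kappa> * Q - t * (4 + \<kappa> * real n))" using s by simp
  also have "\<dots> = \<kappa> * s / 4 * (Q - real n * t) - s * t" by (simp add: algebra_simps)
  finally have "EU_S_F n F f c b m p 0 < EU_S_F n F f c b m p s"
    using gain by linarith
  with s that show thesis by blast
qed

theorem welfare_exceeds_dutch_and_english:
  "\<exists>s\<in>{0<..<s_tilde}.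
    max (EU_S_F n F f c b m p 1) (EU_S_F n F f c b m p 0) < EU_S_F n F f c b m p s"
proof (cases "EU_S_F n F f c b m p 1 \<le> EU_S_F n F f c b m p 0")
  case True
  obtain s where "0 < s" "s < s_tilde" "EU_S_F n F f c b m p 0 < EU_S_F n F f c b m p s"
    by (rule welfare_exceeds_english)
  with True show ?thesis by auto
next
  case False
  obtain s where "0 < s" "s < s_tilde" "EU_S_F n F f c b m p 1 < EU_S_F n F f c b m p s"
    by (rule welfare_exceeds_dutch)
  with False show ?thesis by auto
qed


end

theorem proposition4:
  fixes n :: nat
    and F f f' :: "real \<Rightarrow> real"
    and c c' c'' :: "real \<Rightarrow> real"
    and b m :: "real \<Rightarrow> real \<Rightarrow> real"
    and p :: "real \<Rightarrow> real"
    and s_tilde :: real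
  assumes n2: "n \<ge> 2"
    \<comment> \<open>F is a twice differentiable CDF on [0,1] with density f\<close>
    and F0: "F 0 = 0" and F1: "F 1 = 1"
    and F_mono: "mono_on {0..1} F"
    and f_nonneg: "\<And>x. x \<in> {0..1} \<Longrightarrow> f x \<ge> 0"
    and F_deriv: "\<And>x. x \<in> {0..1} \<Longrightarrow> (F has_real_derivative f x) (at x within {0..1})"
    and f_deriv: "\<And>x. x \<in> {0..1} \<Longrightarrow> (f has_real_derivative f' x) (at x within {0..1})"
    \<comment> \<open>time cost c : [0,1] \<rightarrow> R+, twice differentiable, c 0 = 1, c' > -1\<close>
    and c_nonneg: "\<And>t. t \<in> {0..1} \<Longrightarrow> c t \<ge> 0"
    and c_deriv: "\<And>t. t \<in> {0..1} \<Longrightarrow> (c has_real_derivative c' t) (at t within {0..1})"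
    and c'_deriv: "\<And>t. t \<in> {0..1} \<Longrightarrow> (c' has_real_derivative c'' t) (at t within {0..1})"
    and c0: "c 0 = 1"
    and c'_gt: "\<And>t. t \<in> {0..1} \<Longrightarrow> c' t > -1"
    \<comment> \<open>equilibrium cutoff p\<close>
    and p_range: "\<And>s. s \<in> {0..1} \<Longrightarrow> s \<le> p s \<and> p s \<le> 1"
    \<comment> \<open>English phase drop-out price m\<close>
    and m_range: "\<And>s v. s \<in> {0..1} \<Longrightarrow> v \<in> {p s..1} \<Longrightarrow> s \<le> m v s \<and> m v s - s \<le> 1"
    and m_eq: "\<And>s v. s \<in> {0..1} \<Longrightarrow> v \<in> {p s..1} \<Longrightarrow> c (m v s - s) * v - m v s = 0"
    \<comment> \<open>Dutch phase bid b: strictly increasing solution of the ODE with b(0,s) = 0\<close>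
    and b_cont: "\<And>s. s \<in> {0..1} \<Longrightarrow> continuous_on {0..p s} (\<lambda>v. b v s)"
    and b_strict: "\<And>s. s \<in> {0..1} \<Longrightarrow> strict_mono_on {0..p s} (\<lambda>v. b v s)"
    and b_zero: "\<And>s. s \<in> {0..1} \<Longrightarrow> b 0 s = 0"
    and b_le: "\<And>s v. s \<in> {0..1} \<Longrightarrow> v \<in> {0..p s} \<Longrightarrow> b v s \<le> s"
    and b_ode: "\<And>s v. s \<in> {0..1} \<Longrightarrow> v \<in> {0<..<p s} \<Longrightarrow>
       ((\<lambda>w. b w s) has_real_derivative
          (g_fn n F f v / G_fn n F v) * ((c (s - b v s) * v - b v s) / (1 + c' (s - b v s) * v)))
       (at v)"
    and b_cut: "\<And>s. s \<in> {0..1} \<Longrightarrow> p s < 1 \<Longrightarrow> b (p s) s = s"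
    \<comment> \<open>threshold s_tilde\<close>
    and s_tilde: "0 < s_tilde" "s_tilde < 1"
    and p_lt: "\<And>s. s \<in> {0..<s_tilde} \<Longrightarrow> p s < 1"
    and p_mono: "mono_on {0..<s_tilde} p"
    and p_one: "\<And>s. s \<in> {s_tilde..1} \<Longrightarrow> p s = 1"
    \<comment> \<open>hypotheses of the proposition\<close>
    and c'_neg: "\<And>t. t \<in> {0..1} \<Longrightarrow> c' t < 0"
    and c''_nonneg: "\<And>t. t \<in> {0..1} \<Longrightarrow> c'' t \<ge> 0"
  shows "\<exists>s_hat \<in> {0<..<s_tilde}.
           EU_S_F n F f c b m p s_hat > max (EU_S_F n F f c b m p 1) (EU_S_F n F f c b m p 0)"
proof -
  have "continuous_on {0..1} f" using f_deriv by (rule DERIV_continuous_on)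
  moreover have "continuous_on {0..1} c'" using c'_deriv by (rule DERIV_continuous_on)
  moreover have "mono_on {0..1} c'"
    using c'_deriv c''_nonneg by (rule deriv_nonneg_imp_mono_on) auto
  ultimately interpret flower_auction n F f c c' b m p s_tilde
    using assms by unfold_locales auto
  show ?thesis by (rule welfare_exceeds_dutch_and_english)
qed

end
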